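(* Let $G=(U,V,E)$ be a path-restricted ordered bipartite graph and let $x$ be a vertex of $G$. Two forward paths starting at $x$ in the same direction (both with increasing orders, or both with decreasing orders) never meet again: if both reach a common vertex $y\neq x$, then their subpaths from $x$ to $y$ coincide.
   Context: An ordered bipartite graph is $G=(U,V,E)$ where $U,V$ are disjoint finite sets, each carrying a strict total order (both written $<$), and $E\subseteq U\times V$. A path is a sequence of edges in which consecutive edges share a vertex. A path visiting the vertices of $U$ in the order $u_1,\dots,u_k$ and those of $V$ in the order $v_1,\dots,v_l$ is a forward path if either $u_1<\dots<u_k$ and $v_1<\dots<v_l$, or $u_1>\dots>u_k$ and $v_1>\dots>v_l$. For $x\le y$ in $U$ write $\langle x,y\rangle=\{u\in U: x\le u\le y\}$, and similarly in $V$. If $u_a<u_b$ are the smallest and largest $U$-vertices and $v_c<v_d$ the smallest and largest $V$-vertices of a forward path $P$, the range of $P$ is $\{\langle u_a,u_b\rangle,\langle v_c,v_d\rangle\}$. A vertex of $P$ is non-terminal if it is adjacent along $P$ to two vertices of $P$. An edge is a back edge to $P$ if either it is $(u_a,v_j)$ with $v_j\in\langle v_c,v_d\rangle$ and $v_j>v'$ for some non-terminal vertex $v'\in V$ of $P$, or it is $(u_i,v_c)$ with $u_i\in\langle u_a,u_b\rangle$ and $u_i>u'$ for some non-terminal vertex $u'\in U$ of $P$. $G$ is a path-restricted ordered bipartite graph (PRBG) if no forward path in $G$ has a back edge in $E$. *)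

theory Defs
  imports Main
begin

text \<open>An ordered bipartite graph: the vertex classes are sets U :: 'u set and
V :: 'v set carrying the strict total orders of the linorder types 'u, 'v;
vertices of G are represented in the disjoint sum 'u + 'v (Inl for U, Inr for V).\<close>

definition vert :: "'u set \<Rightarrow> 'v set \<Rightarrow> ('u + 'v) \<Rightarrow> bool" where
  "vert U V w \<longleftrightarrow> (case w of Inl u \<Rightarrow> u \<in> U | Inr v \<Rightarrow> v \<in> V)"

definition adj :: "('u \<times> 'v) set \<Rightarrow> ('u + 'v) \<Rightarrow> ('u + 'v) \<Rightarrow> bool" where
  "adj E a b \<longleftrightarrow> (\<exists>u v. (u, v) \<in> E \<and> ((a = Inl u \<and> b = Inr v) \<or> (a = Inr v \<and> b = Inl u)))"

definition is_path :: "'u set \<Rightarrow> 'v set \<Rightarrow> ('u \<times> 'v) set \<Rightarrow> ('u + 'v) list \<Rightarrow> bool" where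
  "is_path U V E P \<longleftrightarrow> P \<noteq> [] \<and> (\<forall>w\<in>set P. vert U V w) \<and>
     (\<forall>i. Suc i < length P \<longrightarrow> adj E (P ! i) (P ! Suc i))"

definition useq :: "('u + 'v) list \<Rightarrow> 'u list" where
  "useq P = map projl (filter isl P)"

definition vseq :: "('u + 'v) list \<Rightarrow> 'v list" where
  "vseq P = map projr (filter (\<lambda>w. \<not> isl w) P)"

definition fwd_inc :: "'u::linorder set \<Rightarrow> 'v::linorder set \<Rightarrow> ('u \<times> 'v) set \<Rightarrow> ('u + 'v) list \<Rightarrow> bool" where
  "fwd_inc U V E P \<longleftrightarrow> is_path U V E P \<and> sorted_wrt (<) (useq P) \<and> sorted_wrt (<) (vseq P)"

definition fwd_dec :: "'u::linorder set \<Rightarrow> 'v::linorder set \<Rightarrow> ('u \<times> 'v) set \<Rightarrow> ('u + 'v) list \<Rightarrow> bool" where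
  "fwd_dec U V E P \<longleftrightarrow> is_path U V E P \<and> sorted_wrt (>) (useq P) \<and> sorted_wrt (>) (vseq P)"

definition forward_path :: "'u::linorder set \<Rightarrow> 'v::linorder set \<Rightarrow> ('u \<times> 'v) set \<Rightarrow> ('u + 'v) list \<Rightarrow> bool" where
  "forward_path U V E P \<longleftrightarrow> fwd_inc U V E P \<or> fwd_dec U V E P"

text \<open>A vertex of P is non-terminal if it is adjacent along P to two vertices of P,
i.e. it occurs at an interior position of the vertex list.\<close>
definition non_terminal :: "('u + 'v) list \<Rightarrow> ('u + 'v) \<Rightarrow> bool" where
  "non_terminal P w \<longleftrightarrow> (\<exists>i. 0 < i \<and> Suc i < length P \<and> P ! i = w)"

definition Us :: "('u + 'v) list \<Rightarrow> 'u set" where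
  "Us P = {u. Inl u \<in> set P}"

definition Vs :: "('u + 'v) list \<Rightarrow> 'v set" where
  "Vs P = {v. Inr v \<in> set P}"

definition back_edge :: "'u::linorder set \<Rightarrow> 'v::linorder set \<Rightarrow> ('u + 'v) list \<Rightarrow> ('u \<times> 'v) \<Rightarrow> bool" where
  "back_edge U V P e \<longleftrightarrow>
     (fst e = Min (Us P) \<and> snd e \<in> V \<and> Min (Vs P) \<le> snd e \<and> snd e \<le> Max (Vs P) \<and>
        (\<exists>v'. non_terminal P (Inr v') \<and> v' < snd e))
   \<or> (snd e = Min (Vs P) \<and> fst e \<in> U \<and> Min (Us P) \<le> fst e \<and> fst e \<le> Max (Us P) \<and>
        (\<exists>u'. non_terminal P (Inl u') \<and> u' < fst e))"

definition PRBG :: "'u::linorder set \<Rightarrow> 'v::linorder set \<Rightarrow> ('u \<times> 'v) set \<Rightarrow> bool" where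
  "PRBG U V E \<longleftrightarrow> finite U \<and> finite V \<and> E \<subseteq> U \<times> V \<and>
     (\<forall>P e. forward_path U V E P \<and> e \<in> E \<longrightarrow> \<not> back_edge U V P e)"

end

theory Submission
  imports Defs
begin

text \<open>Reversal turns decreasing forward paths into increasing ones, and exchanging the roles of
  U and V preserves everything, so consider two increasing forward paths leaving a U-vertex u
  along different edges (u, va) and (u, vb), va < vb, that end in the same vertex w.
  If w is a V-vertex, then va < vb \<le> w, so (u, vb) is a back edge to the path through va.
  If w is a U-vertex, the path through va continues to some u1 with u < u1 \<le> w, and
  (u1, va) is a back edge to the increasing path va, u, vb, \<dots>, w.
  Hence two increasing forward paths with common ends can never branch apart, and they coincide.\<close>

lemma useq_simps [simp]:
  "useq [] = []" "useq (Inl u # P) = u # useq P" "useq (Inr v # P) = useq P"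
  "useq (P @ Q) = useq P @ useq Q" "useq (rev P) = rev (useq P)"
  by (auto simp: useq_def rev_filter rev_map)

lemma vseq_simps [simp]:
  "vseq [] = []" "vseq (Inr v # P) = v # vseq P" "vseq (Inl u # P) = vseq P"
  "vseq (P @ Q) = vseq P @ vseq Q" "vseq (rev P) = rev (vseq P)"
  by (auto simp: vseq_def rev_filter rev_map)

lemma set_useq: "set (useq P) = Us P"
  by (force simp: useq_def Us_def image_iff)

lemma set_vseq: "set (vseq P) = Vs P"
  by (force simp: vseq_def Vs_def image_iff)

lemma finite_Us [simp]: "finite (Us P)"
  by (simp flip: set_useq)

lemma finite_Vs [simp]: "finite (Vs P)"
  by (simp flip: set_vseq)

lemma Min_set_sorted_Cons:
  fixes x :: "'a::linorder"
  shows "sorted_wrt (<) (x # xs) \<Longrightarrow> Min (set (x # xs)) = x"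
  by (rule Min_eqI) auto

lemma Min_le_Max_between:
  fixes x :: "'a::linorder"
  assumes "finite S" "a \<in> S" "b \<in> S" "a \<le> x" "x \<le> b"
  shows "Min S \<le> x \<and> x \<le> Max S"
  using assms by (meson Max_ge Min_le order_trans)

lemma adj_simps [simp]:
  "adj E (Inl u) (Inr v) \<longleftrightarrow> (u, v) \<in> E" "adj E (Inr v) (Inl u) \<longleftrightarrow> (u, v) \<in> E"
  "\<not> adj E (Inl u) (Inl u')" "\<not> adj E (Inr v) (Inr v')"
  by (auto simp: adj_def)

lemma adj_commute: "adj E a b \<longleftrightarrow> adj E b a"
  by (auto simp: adj_def)

lemma is_path_Cons_Cons [simp]:
  "is_path U V E (a # b # P) \<longleftrightarrow> vert U V a \<and> adj E a b \<and> is_path U V E (b # P)"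
  by (auto simp: is_path_def nth_Cons split: nat.splits)

lemma is_path_Cons_vert: "is_path U V E (a # P) \<Longrightarrow> vert U V a"
  by (simp add: is_path_def)

lemma is_path_rev: "is_path U V E P \<Longrightarrow> is_path U V E (rev P)"
  unfolding is_path_def
proof (intro conjI allI impI)
  fix i assume P: "P \<noteq> [] \<and> (\<forall>w\<in>set P. vert U V w) \<and> (\<forall>i. Suc i < length P \<longrightarrow> adj E (P ! i) (P ! Suc i))"
    and i: "Suc i < length (rev P)"
  let ?k = "length P - Suc (Suc i)"
  have "adj E (P ! ?k) (P ! Suc ?k)" using P i by auto
  moreover have "rev P ! i = P ! Suc ?k" "rev P ! Suc i = P ! ?k" using i
    by (auto simp: rev_nth Suc_diff_Suc)
  ultimately show "adj E (rev P ! i) (rev P ! Suc i)" by (simp add: adj_commute)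
qed auto

lemma is_path_take: "is_path U V E P \<Longrightarrow> 0 < n \<Longrightarrow> is_path U V E (take n P)"
  unfolding is_path_def by (auto dest: in_set_takeD)

lemma is_path_tl: "is_path U V E (a # P) \<Longrightarrow> P \<noteq> [] \<Longrightarrow> is_path U V E P"
  by (cases P) auto

lemma fwd_inc_take: "fwd_inc U V E P \<Longrightarrow> 0 < n \<Longrightarrow> fwd_inc U V E (take n P)"
  unfolding fwd_inc_def
  by (metis append_take_drop_id is_path_take sorted_wrt_append useq_simps(4) vseq_simps(4))

lemma fwd_dec_take: "fwd_dec U V E P \<Longrightarrow> 0 < n \<Longrightarrow> fwd_dec U V E (take n P)"
  unfolding fwd_dec_def
  by (metis append_take_drop_id is_path_take sorted_wrt_append useq_simps(4) vseq_simps(4))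

lemma fwd_inc_tl: "fwd_inc U V E (a # P) \<Longrightarrow> P \<noteq> [] \<Longrightarrow> fwd_inc U V E P"
  unfolding fwd_inc_def using is_path_tl by (cases a) auto

lemma fwd_inc_rev_iff: "fwd_inc U V E (rev P) \<longleftrightarrow> fwd_dec U V E P"
  unfolding fwd_inc_def fwd_dec_def
  by (metis is_path_rev rev_rev_ident sorted_wrt_rev useq_simps(5) vseq_simps(5))

lemma fwd_inc_distinct: "fwd_inc U V E P \<Longrightarrow> distinct P"
proof (induction P)
  case (Cons a P)
  have "distinct P"
    using Cons by (cases "P = []") (auto dest: fwd_inc_tl)
  moreover have "a \<notin> set P"
    using Cons.prems by (cases a) (auto simp: fwd_inc_def set_useq set_vseq Us_def Vs_def)
  ultimately show ?case by simp
qed simp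

definition swap_side :: "'a + 'b \<Rightarrow> 'b + 'a" where
  "swap_side = case_sum Inr Inl"

lemma swap_side_simps [simp]:
  "swap_side (Inl a) = Inr a" "swap_side (Inr b) = Inl b" "swap_side (swap_side w) = w"
  by (auto simp: swap_side_def split: sum.split)

lemma swap_side_eq_iff [simp]: "swap_side a = swap_side b \<longleftrightarrow> a = b"
  by (metis swap_side_simps(3))

lemma useq_map_swap_side [simp]: "useq (map swap_side P) = vseq P"
  and vseq_map_swap_side [simp]: "vseq (map swap_side P) = useq P"
  by (induction P rule: list.induct) (auto simp: swap_side_def split: sum.split)

lemma Us_map_swap_side [simp]: "Us (map swap_side P) = Vs P"
  and Vs_map_swap_side [simp]: "Vs (map swap_side P) = Us P"
  by (simp_all flip: set_useq set_vseq)

lemma vert_swap_side [simp]: "vert V U (swap_side w) \<longleftrightarrow> vert U V w"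
  by (cases w) (auto simp: vert_def)

lemma adj_swap_side [simp]: "adj (prod.swap ` E) (swap_side a) (swap_side b) \<longleftrightarrow> adj E a b"
  by (cases a; cases b) auto

lemma is_path_map_swap_side [simp]:
  "is_path V U (prod.swap ` E) (map swap_side P) \<longleftrightarrow> is_path U V E P"
  by (simp add: is_path_def)

lemma fwd_inc_map_swap_side [simp]:
  "fwd_inc V U (prod.swap ` E) (map swap_side P) \<longleftrightarrow> fwd_inc U V E P"
  by (simp add: fwd_inc_def conj_commute)

lemma forward_path_map_swap_side [simp]:
  "forward_path V U (prod.swap ` E) (map swap_side P) \<longleftrightarrow> forward_path U V E P"
  by (auto simp: forward_path_def fwd_inc_def fwd_dec_def)

lemma non_terminal_map_swap_side [simp]:
  "non_terminal (map swap_side P) (swap_side w) \<longleftrightarrow> non_terminal P w"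
  by (auto simp: non_terminal_def)

lemma back_edge_map_swap_side [simp]:
  "back_edge V U (map swap_side P) (prod.swap e) \<longleftrightarrow> back_edge U V P e"
proof -
  have "non_terminal (map swap_side P) (Inl w) \<longleftrightarrow> non_terminal P (Inr w)"
    and "non_terminal (map swap_side P) (Inr w') \<longleftrightarrow> non_terminal P (Inl w')" for w w'
    using non_terminal_map_swap_side[of P "Inr w"] non_terminal_map_swap_side[of P "Inl w'"]
    by simp_all
  then show ?thesis
    unfolding back_edge_def by (simp add: disj_commute)
qed

lemma PRBG_swap: "PRBG U V E \<Longrightarrow> PRBG V U (prod.swap ` E)"
  unfolding PRBG_def
proof (elim conjE, intro conjI allI impI notI)
  fix P e
  assume no_back: "\<forall>P e. forward_path U V E P \<and> e \<in> E \<longrightarrow> \<not> back_edge U V P e"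
    and "forward_path V U (prod.swap ` E) P \<and> e \<in> prod.swap ` E" and "back_edge V U P e"
  moreover have "prod.swap ` prod.swap ` E = E"
    by (simp add: image_image)
  ultimately have "forward_path U V E (map swap_side P)" "prod.swap e \<in> E"
    and "back_edge U V (map swap_side P) (prod.swap e)"
    using forward_path_map_swap_side[of U V "prod.swap ` E" P] back_edge_map_swap_side[of U V P e]
    by auto
  with no_back show False by blast
qed auto

lemma PRBG_no_back_edge:
  "PRBG U V E \<Longrightarrow> fwd_inc U V E P \<Longrightarrow> e \<in> E \<Longrightarrow> \<not> back_edge U V P e"
  unfolding PRBG_def forward_path_def by blast

lemma back_edge_at_U_head:
  assumes path: "fwd_inc U V E (Inl u # Inr v # P)"
    and "v' \<in> V" "v < v'" and w: "Inr w \<in> set P" "v' \<le> w"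
  shows "back_edge U V (Inl u # Inr v # P) (u, v')"
proof -
  let ?A = "Inl u # Inr v # P"
  have "Min (Us ?A) = u"
    using path Min_set_sorted_Cons[of u "useq P"] by (simp add: fwd_inc_def flip: set_useq)
  moreover have "Min (Vs ?A) \<le> v' \<and> v' \<le> Max (Vs ?A)"
    using w \<open>v < v'\<close> by (intro Min_le_Max_between[of "Vs ?A" v w] finite_Vs) (auto simp: Vs_def)
  moreover have "non_terminal ?A (Inr v)"
    using w unfolding non_terminal_def by (intro exI[of _ 1]) auto
  ultimately show ?thesis
    using \<open>v' \<in> V\<close> \<open>v < v'\<close> by (auto simp: back_edge_def)
qed

lemma back_edge_at_V_head:
  assumes "fwd_inc U V E (Inr v # Inl u # P)"
    and "u' \<in> U" "u < u'" "Inl w \<in> set P" "u' \<le> w"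
  shows "back_edge U V (Inr v # Inl u # P) (u', v)"
proof -
  have "back_edge V U (map swap_side (Inr v # Inl u # P)) (prod.swap (u', v))"
    using assms back_edge_at_U_head[of V U "prod.swap ` E" v u "map swap_side P" u' w]
    by (force simp del: fwd_inc_map_swap_side
        simp: fwd_inc_map_swap_side[of V U E, symmetric])
  then show ?thesis by (simp only: back_edge_map_swap_side)
qed

lemma fwd_inc_no_rejoin_from_U_ordered:
  assumes G: "PRBG U V E"
    and fA: "fwd_inc U V E (Inl u # Inr va # A)" and fB: "fwd_inc U V E (Inl u # Inr vb # B)"
    and "va < vb" and same_end: "last (Inl u # Inr va # A) = last (Inl u # Inr vb # B)"
  shows False
proof (cases "last (Inl u # Inr va # A)")
  case (Inr w)
  then have "Inr w \<in> set (Inr vb # B)"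
    using same_end by (metis last_ConsR last_in_set list.distinct(1))
  then have "vb \<le> w"
    using fB by (auto simp: fwd_inc_def set_vseq Vs_def)
  with \<open>va < vb\<close> have "Inr w \<in> set A"
    using Inr by (metis last_ConsR last_in_set list.distinct(1) not_le set_ConsD sum.inject(2))
  moreover have "(u, vb) \<in> E" "vb \<in> V"
    using fB by (auto simp: fwd_inc_def vert_def dest: is_path_Cons_vert)
  ultimately show False
    using back_edge_at_U_head[OF fA] PRBG_no_back_edge[OF G fA] \<open>va < vb\<close> \<open>vb \<le> w\<close> by blast
next
  case (Inl w)
  then obtain a A' where "A = a # A'"
    by (cases A) auto
  moreover from this have "adj E (Inr va) a" "vert U V a"
    using fA by (auto simp: fwd_inc_def dest: is_path_Cons_vert)
  ultimately obtain u1 where A: "A = Inl u1 # A'" and "(u1, va) \<in> E" "u1 \<in> U"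
    by (cases a) (auto simp: vert_def)
  let ?C = "Inr va # Inl u # Inr vb # B"
  have "Inl w \<in> set (Inl u1 # A')"
    using Inl A by (metis last_ConsR last_in_set list.distinct(1))
  then have "u < u1" "u1 \<le> w"
    using fA by (auto simp: A fwd_inc_def set_useq Us_def less_imp_le)
  have "Inl w \<in> set (Inr vb # B)"
    using Inl same_end by (metis last_ConsR last_in_set list.distinct(1))
  moreover have fC: "fwd_inc U V E ?C"
    using fA fB \<open>va < vb\<close> by (auto simp: fwd_inc_def vert_def dest: is_path_Cons_vert)
  ultimately have "back_edge U V ?C (u1, va)"
    using back_edge_at_V_head \<open>u1 \<in> U\<close> \<open>u < u1\<close> \<open>u1 \<le> w\<close> by blast
  then show False
    using PRBG_no_back_edge[OF G fC] \<open>(u1, va) \<in> E\<close> by blast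
qed

lemma fwd_inc_no_rejoin_from_U:
  assumes G: "PRBG U V E"
    and fA: "fwd_inc U V E (Inl u # a # A)" and fB: "fwd_inc U V E (Inl u # b # B)"
    and "a \<noteq> b" and same_end: "last (Inl u # a # A) = last (Inl u # b # B)"
  shows False
proof -
  obtain va vb where ab: "a = Inr va" "b = Inr vb"
    using fA fB by (cases a; cases b) (auto simp: fwd_inc_def)
  with \<open>a \<noteq> b\<close> consider "va < vb" | "vb < va"
    by fastforce
  then show False
    using fwd_inc_no_rejoin_from_U_ordered[OF G] fA fB same_end unfolding ab by metis
qed

lemma fwd_inc_no_rejoin:
  assumes G: "PRBG U V E"
    and fA: "fwd_inc U V E (x # a # A)" and fB: "fwd_inc U V E (x # b # B)"
    and "a \<noteq> b" and same_end: "last (x # a # A) = last (x # b # B)"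
  shows False
proof (cases x)
  case (Inl u)
  then show False
    using fwd_inc_no_rejoin_from_U[OF G] assms by blast
next
  case (Inr v)
  have "fwd_inc V U (prod.swap ` E) (Inl v # swap_side a # map swap_side A)"
    and "fwd_inc V U (prod.swap ` E) (Inl v # swap_side b # map swap_side B)"
    using fA fB Inr fwd_inc_map_swap_side[of V U E] by (metis list.simps(9) swap_side_simps(2))+
  moreover have "swap_side a \<noteq> swap_side b"
    using \<open>a \<noteq> b\<close> by simp
  moreover have "last (Inl v # swap_side a # map swap_side A) = last (Inl v # swap_side b # map swap_side B)"
    using same_end Inr by (auto simp: last_map split: if_splits)
  ultimately show False
    using fwd_inc_no_rejoin_from_U[OF PRBG_swap[OF G]] by blast
qed

lemma fwd_inc_unique:
  assumes G: "PRBG U V E"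
  shows "fwd_inc U V E A \<Longrightarrow> fwd_inc U V E B \<Longrightarrow> hd A = hd B \<Longrightarrow> last A = last B \<Longrightarrow> A = B"
proof (induction A arbitrary: B)
  case Nil
  then show ?case by (simp add: fwd_inc_def is_path_def)
next
  case (Cons x A)
  then obtain B' where B: "B = x # B'"
    by (cases B) (auto simp: fwd_inc_def is_path_def)
  have "x \<notin> set A" "x \<notin> set B'"
    using Cons.prems fwd_inc_distinct B by force+
  show ?case
  proof (cases A)
    case Nil
    then show ?thesis
      using Cons.prems \<open>x \<notin> set B'\<close> B by (metis last.simps last_in_set)
  next
    case (Cons a A')
    then have "B' \<noteq> []"
      using Cons.prems \<open>x \<notin> set A\<close> B by (metis last.simps last_in_set list.distinct(1))
    then obtain b B'' where B': "B' = b # B''"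
      by (cases B') auto
    show ?thesis
    proof (cases "a = b")
      case True
      have "fwd_inc U V E A" "fwd_inc U V E B'"
        using Cons.prems fwd_inc_tl \<open>A = a # A'\<close> B B' by blast+
      moreover have "hd A = hd B'" "last A = last B'"
        using Cons.prems True \<open>A = a # A'\<close> B B' by simp_all
      ultimately have "A = B'"
        using Cons.IH by blast
      then show ?thesis by (simp add: B)
    next
      case False
      then show ?thesis
        using fwd_inc_no_rejoin[OF G] Cons.prems \<open>A = a # A'\<close> B B' by blast
    qed
  qed
qed

theorem lemma4:
  fixes U :: "'u::linorder set" and V :: "'v::linorder set" and E :: "('u \<times> 'v) set"
    and x y :: "'u + 'v" and P Q :: "('u + 'v) list"
  assumes "PRBG U V E"
    and "vert U V x"
    and "(fwd_inc U V E P \<and> fwd_inc U V E Q) \<or> (fwd_dec U V E P \<and> fwd_dec U V E Q)"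
    and "hd P = x" and "hd Q = x"
    and "y \<noteq> x"
    and "i < length P" and "P ! i = y"
    and "j < length Q" and "Q ! j = y"
  shows "take (Suc i) P = take (Suc j) Q"
proof -
  let ?A = "take (Suc i) P" and ?B = "take (Suc j) Q"
  have ends: "hd ?A = hd ?B" "last ?A = last ?B"
    using assms by (simp, simp add: take_Suc_conv_app_nth)
  from assms(3) show ?thesis
  proof
    assume "fwd_inc U V E P \<and> fwd_inc U V E Q"
    then have "fwd_inc U V E ?A" "fwd_inc U V E ?B"
      by (simp_all add: fwd_inc_take)
    then show ?thesis
      using fwd_inc_unique[OF assms(1)] ends by blast
  next
    assume "fwd_dec U V E P \<and> fwd_dec U V E Q"
    then have "fwd_inc U V E (rev ?A)" "fwd_inc U V E (rev ?B)"
      by (simp_all add: fwd_inc_rev_iff fwd_dec_take)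
    moreover have "hd (rev ?A) = hd (rev ?B)" "last (rev ?A) = last (rev ?B)"
      using ends assms(7,9) by (simp_all add: hd_rev last_rev)
    ultimately show ?thesis
      using fwd_inc_unique[OF assms(1)] by (metis rev_rev_ident)
  qed
qed

end
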